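(* Let $G$ be a finite group acting $2$-transitively on a finite set $X$, let $x\in X$, and suppose the stabilizer $H=\mathrm{Stab}_G(x)$ is mixable. Then $G$ is mixable, and \[\mathrm{mixlen}(G)\le \mathrm{mixlen}(H)+\mathrm{mixlen}(H,X\setminus\{x\})+1.\]
   Context: For a finite group $G$, a random subproduct is a random element $g_1^{\epsilon_1}\cdots g_k^{\epsilon_k}$ with $g_1,\dots,g_k\in G$ fixed and $\epsilon_1,\dots,\epsilon_k$ independent Bernoulli random variables, $\epsilon_i\sim\mathrm{Ber}(p_i)$, $p_i\in[0,1]$; $k$ is its length. $G$ is mixable if some random subproduct is exactly uniform on $G$, and $\mathrm{mixlen}(G)$ is the minimal such length. For a transitive action of a group $H$ on a finite set $Y$, the action is mixable if for some (equivalently every) $y_0\in Y$ there is a random subproduct $\mathbf{h}$ in $H$ with $\mathbf{h}y_0$ uniform on $Y$, and $\mathrm{mixlen}(H,Y)$ is the minimal length of such a random subproduct. (By $2$-transitivity, $H$ acts transitively on $X\setminus\{x\}$.) *)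

theory Defs
  imports Complex_Main "HOL-Algebra.Group_Action"
begin

fun subprod :: "('a, 'm) monoid_scheme \<Rightarrow> 'a list \<Rightarrow> bool list \<Rightarrow> 'a" where
  "subprod G (g # gs) (e # es) = (if e then g else \<one>\<^bsub>G\<^esub>) \<otimes>\<^bsub>G\<^esub> subprod G gs es"
| "subprod G _ _ = \<one>\<^bsub>G\<^esub>"

text \<open>Probability of the outcome vector es for independent Bernoulli(p_i) variables.\<close>
definition bern_weight :: "real list \<Rightarrow> bool list \<Rightarrow> real" where
  "bern_weight ps es = (\<Prod>i<length ps. if es ! i then ps ! i else 1 - ps ! i)"

definition subprod_prob ::
  "('a, 'm) monoid_scheme \<Rightarrow> ('a \<Rightarrow> 'b) \<Rightarrow> 'a list \<Rightarrow> real list \<Rightarrow> 'b \<Rightarrow> real" where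
  "subprod_prob G f gs ps a =
     (\<Sum>es\<in>{es. length es = length gs}. if f (subprod G gs es) = a then bern_weight ps es else 0)"

definition valid_subproduct :: "('a, 'm) monoid_scheme \<Rightarrow> 'a list \<Rightarrow> real list \<Rightarrow> bool" where
  "valid_subproduct G gs ps \<longleftrightarrow>
     set gs \<subseteq> carrier G \<and> length ps = length gs \<and> (\<forall>p\<in>set ps. 0 \<le> p \<and> p \<le> 1)"

definition mixing_subproduct :: "('a, 'm) monoid_scheme \<Rightarrow> 'a list \<Rightarrow> real list \<Rightarrow> bool" where
  "mixing_subproduct G gs ps \<longleftrightarrow> valid_subproduct G gs ps \<and>
     (\<forall>a\<in>carrier G. subprod_prob G id gs ps a = 1 / real (card (carrier G)))"

definition mixable :: "('a, 'm) monoid_scheme \<Rightarrow> bool" where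
  "mixable G \<longleftrightarrow> (\<exists>gs ps. mixing_subproduct G gs ps)"

definition mixlen :: "('a, 'm) monoid_scheme \<Rightarrow> nat" where
  "mixlen G = (LEAST k. \<exists>gs ps. length gs = k \<and> mixing_subproduct G gs ps)"

definition mixing_action_subproduct ::
  "('a, 'm) monoid_scheme \<Rightarrow> ('a \<Rightarrow> 'b \<Rightarrow> 'b) \<Rightarrow> 'b set \<Rightarrow> 'b \<Rightarrow> 'a list \<Rightarrow> real list \<Rightarrow> bool" where
  "mixing_action_subproduct H \<phi> Y y0 gs ps \<longleftrightarrow> valid_subproduct H gs ps \<and>
     (\<forall>y\<in>Y. subprod_prob H (\<lambda>h. \<phi> h y0) gs ps y = 1 / real (card Y))"

definition mixable_action :: "('a, 'm) monoid_scheme \<Rightarrow> ('a \<Rightarrow> 'b \<Rightarrow> 'b) \<Rightarrow> 'b set \<Rightarrow> bool" where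
  "mixable_action H \<phi> Y \<longleftrightarrow> (\<exists>y0\<in>Y. \<exists>gs ps. mixing_action_subproduct H \<phi> Y y0 gs ps)"

definition mixlen_action :: "('a, 'm) monoid_scheme \<Rightarrow> ('a \<Rightarrow> 'b \<Rightarrow> 'b) \<Rightarrow> 'b set \<Rightarrow> nat" where
  "mixlen_action H \<phi> Y =
     (LEAST k. \<exists>y0\<in>Y. \<exists>gs ps. length gs = k \<and> mixing_action_subproduct H \<phi> Y y0 gs ps)"

definition two_transitive_action :: "('a, 'm) monoid_scheme \<Rightarrow> 'b set \<Rightarrow> ('a \<Rightarrow> 'b \<Rightarrow> 'b) \<Rightarrow> bool" where
  "two_transitive_action G X \<phi> \<longleftrightarrow> group_action G X \<phi> \<and> 2 \<le> card X \<and>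
     (\<forall>x1\<in>X. \<forall>x2\<in>X. \<forall>y1\<in>X. \<forall>y2\<in>X. x1 \<noteq> x2 \<longrightarrow> y1 \<noteq> y2 \<longrightarrow>
        (\<exists>g\<in>carrier G. \<phi> g x1 = y1 \<and> \<phi> g x2 = y2))"

end

theory Submission
  imports Defs
begin

text \<open>Let H be the stabilizer of x and n = |X|. Take a subproduct a of H that moves some
  point y0 \<noteq> x uniformly over X - {x}, an element t with t x = y0, and a subproduct b that
  is uniform on H. Then a t^\<epsilon> b with \<epsilon> \<sim> Ber((n - 1)/n) is uniform on G: the point
  a t^\<epsilon> x is x with probability 1/n (as a fixes x) and otherwise uniform on X - {x},
  hence uniform on X; it determines the coset a t^\<epsilon> H, on which the independent factor b
  is uniform; and |G| = n |H|. Such an a exists because pushing a uniform element of H to an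
  H-orbit gives the uniform distribution on that orbit.\<close>

sublocale group_action \<subseteq> group G
  by (rule group_hom.axioms(1)[OF group_hom])

lemma subprod_carrier_update [simp]: "subprod (G\<lparr>carrier := S\<rparr>) = subprod G"
proof (intro ext)
  fix gs es show "subprod (G\<lparr>carrier := S\<rparr>) gs es = subprod G gs es"
    by (induction gs es rule: subprod.induct) simp_all
qed

lemma subprod_prob_carrier_update [simp]: "subprod_prob (G\<lparr>carrier := S\<rparr>) = subprod_prob G"
  by (intro ext) (simp add: subprod_prob_def)

lemma (in monoid) subprod_closed: "set gs \<subseteq> carrier G \<Longrightarrow> subprod G gs es \<in> carrier G"
proof (induction gs arbitrary: es)
  case (Cons g gs)
  then show ?case by (cases es) auto
qed simp

lemma (in group) subprod_mem_subgroup: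
  assumes "subgroup K G" and "set gs \<subseteq> K"
  shows "subprod G gs es \<in> K"
  using monoid.subprod_closed[OF group.is_monoid[OF subgroup.subgroup_is_group[OF assms(1) is_group]]]
    assms(2) by simp

lemma (in monoid) subprod_append:
  assumes "length gs = length es" and "set gs \<subseteq> carrier G" and "set gs' \<subseteq> carrier G"
  shows "subprod G (gs @ gs') (es @ es') = subprod G gs es \<otimes> subprod G gs' es'"
  using assms(1,2)
  by (induction gs es rule: list_induct2) (simp_all add: subprod_closed assms(3) m_assoc)

lemma subprod_prob_eq_0:
  "(\<And>es. f (subprod G gs es) \<noteq> a) \<Longrightarrow> subprod_prob G f gs ps a = 0"
  by (simp add: subprod_prob_def)

lemma bern_weight_Nil [simp]: "bern_weight [] es = 1"
  by (simp add: bern_weight_def)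

lemma bern_weight_Cons [simp]:
  "bern_weight (p # ps) (e # es) = (if e then p else 1 - p) * bern_weight ps es"
  unfolding bern_weight_def
  by (simp only: length_Cons prod.lessThan_Suc_shift nth_Cons_Suc nth_Cons_0)

lemma bern_weight_append:
  "length es = length ps \<Longrightarrow>
    bern_weight (ps @ ps') (es @ es') = bern_weight ps es * bern_weight ps' es'"
  by (induction es ps rule: list_induct2) simp_all

lemma sum_lists_length_add:
  fixes f :: "'a list \<Rightarrow> 'b::comm_monoid_add"
  shows "(\<Sum>es\<in>{es. length es = m + n}. f es) =
     (\<Sum>es\<in>{es. length es = m}. \<Sum>es'\<in>{es'. length es' = n}. f (es @ es'))"
proof -
  have lists: "{es :: 'a list. length es = m + n} =
      (\<lambda>(es, es'). es @ es') ` ({es. length es = m} \<times> {es'. length es' = n})"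
  proof (intro Set.set_eqI iffI)
    fix es :: "'a list" assume "es \<in> {es. length es = m + n}"
    then show "es \<in> (\<lambda>(es, es'). es @ es') ` ({es. length es = m} \<times> {es'. length es' = n})"
      by (intro image_eqI[where x = "(take m es, drop m es)"]) auto
  qed auto
  have "inj_on (\<lambda>(es, es'). es @ es') ({es :: 'a list. length es = m} \<times> {es'. length es' = n})"
    by (auto simp: inj_on_def)
  then show ?thesis
    unfolding lists by (simp add: sum.reindex sum.cartesian_product comp_def split_def)
qed

lemma sum_bool_lists_length_Suc:
  "(\<Sum>es\<in>{es. length es = Suc n}. f es) =
     (\<Sum>es\<in>{es. length es = n}. f (True # es) + f (False # es))"
proof -
  have "{es :: bool list. length es = 1} = {[True], [False]}"
    by (auto simp: length_Suc_conv)
  then show ?thesis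
    using sum_lists_length_add[of f 1 n] by (simp add: sum.distrib)
qed

lemma sum_bern_weight: "(\<Sum>es\<in>{es. length es = length ps}. bern_weight ps es) = 1"
  by (induction ps) (simp_all add: sum_bool_lists_length_Suc flip: distrib_right)

lemma (in monoid) subprod_prob_append:
  assumes "length gs = length ps" and "set gs \<subseteq> carrier G" and "set gs' \<subseteq> carrier G"
  shows "subprod_prob G f (gs @ gs') (ps @ ps') y =
    (\<Sum>es\<in>{es. length es = length gs}.
       bern_weight ps es * subprod_prob G (\<lambda>g. f (subprod G gs es \<otimes> g)) gs' ps' y)"
  unfolding subprod_prob_def length_append sum_lists_length_add
  using assms by (auto simp: sum_distrib_left subprod_append bern_weight_append intro!: sum.cong)

lemma (in monoid) subprod_prob_singleton:
  assumes "t \<in> carrier G"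
  shows "subprod_prob G f [t] [p] y = (if f t = y then p else 0) + (if f \<one> = y then 1 - p else 0)"
  using assms by (simp add: subprod_prob_def sum_bool_lists_length_Suc)

lemma subprod_prob_fibres:
  assumes "finite T" and "\<And>es. subprod G gs es \<in> T"
  shows "subprod_prob G f gs ps a = (\<Sum>h\<in>{h\<in>T. f h = a}. subprod_prob G id gs ps h)"
proof -
  let ?E = "{es :: bool list. length es = length gs}"
  have "(\<Sum>h\<in>{h\<in>T. f h = a}. subprod_prob G id gs ps h)
     = (\<Sum>es\<in>?E. \<Sum>h\<in>{h\<in>T. f h = a}. if subprod G gs es = h then bern_weight ps es else 0)"
    unfolding subprod_prob_def by (simp add: sum.swap[of _ _ ?E])
  also have "\<dots> = (\<Sum>es\<in>?E. if f (subprod G gs es) = a then bern_weight ps es else 0)"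
    using assms by (intro sum.cong refl) (simp add: sum.delta')
  finally show ?thesis unfolding subprod_prob_def by simp
qed

lemma (in group) subprod_prob_translate_uniform:
  assumes "subgroup S G" and "mixing_subproduct (G\<lparr>carrier := S\<rparr>) gs ps"
    and "k \<in> carrier G" and "a \<in> carrier G"
  shows "subprod_prob G (\<lambda>g. k \<otimes> g) gs ps a = (if inv k \<otimes> a \<in> S then 1 / card S else 0)"
proof -
  have gs: "set gs \<subseteq> S"
    and uniform: "\<And>h. h \<in> S \<Longrightarrow> subprod_prob G id gs ps h = 1 / card S"
    using assms(2) by (auto simp: mixing_subproduct_def valid_subproduct_def)
  have mem: "subprod G gs es \<in> S" for es
    using subprod_mem_subgroup[OF assms(1) gs] .
  have "subprod G gs es \<in> carrier G" for es
    using mem subgroup.subset[OF assms(1)] by blast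
  then have "k \<otimes> subprod G gs es = a \<longleftrightarrow> subprod G gs es = inv k \<otimes> a" for es
    using inv_solve_left[OF _ assms(3,4)] by metis
  then have "subprod_prob G (\<lambda>g. k \<otimes> g) gs ps a = subprod_prob G id gs ps (inv k \<otimes> a)"
    by (simp add: subprod_prob_def)
  also have "\<dots> = (if inv k \<otimes> a \<in> S then 1 / card S else 0)"
  proof (cases "inv k \<otimes> a \<in> S")
    case False
    then have "id (subprod G gs es) \<noteq> inv k \<otimes> a" for es
      using mem[of es] False by auto
    with False show ?thesis by (simp add: subprod_prob_eq_0)
  qed (simp add: uniform)
  finally show ?thesis .
qed

lemma (in group_action) inv_mult_mem_stabilizer_iff:
  assumes x: "x \<in> E" and g: "g \<in> carrier G" and h: "h \<in> carrier G"
  shows "inv g \<otimes> h \<in> stabilizer G \<phi> x \<longleftrightarrow> \<phi> h x = \<phi> g x"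
proof -
  have hx: "\<phi> h x \<in> E"
    using element_image[OF h x refl] .
  have "\<phi> (inv g) (\<phi> h x) = x \<longleftrightarrow> \<phi> h x = \<phi> g x"
  proof
    assume "\<phi> (inv g) (\<phi> h x) = x"
    from orbit_sym_aux[OF inv_closed[OF g] hx this] show "\<phi> h x = \<phi> g x"
      by (simp add: g)
  next
    assume "\<phi> h x = \<phi> g x"
    with orbit_sym_aux[OF g x refl] show "\<phi> (inv g) (\<phi> h x) = x"
      by simp
  qed
  then show ?thesis
    using composition_rule[OF x inv_closed[OF g] h] g h by (simp add: stabilizer_def)
qed

lemma (in group_action) card_fibre_mult_card_orbit:
  assumes K: "subgroup K G" "finite K" and "y0 \<in> E"
    and y: "y \<in> orbit (G\<lparr>carrier := K\<rparr>) \<phi> y0"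
  shows "card {g \<in> K. \<phi> g y0 = y} * card (orbit (G\<lparr>carrier := K\<rparr>) \<phi> y0) = card K"
proof -
  let ?O = "orbit (G\<lparr>carrier := K\<rparr>) \<phi> y0"
  define F where "F z = {g \<in> K. \<phi> g y0 = z}" for z
  have O: "?O = (\<lambda>g. \<phi> g y0) ` K"
    by (auto simp: orbit_def)
  have KG: "K \<subseteq> carrier G"
    using subgroup.subset[OF K(1)] .
  have translate: "F (\<phi> g y0) = (\<lambda>h. g \<otimes> h) ` F y0" if g: "g \<in> K" for g
  proof (intro Set.set_eqI iffI)
    fix h assume "h \<in> F (\<phi> g y0)"
    then have "inv g \<otimes> h \<in> F y0" and "h = g \<otimes> (inv g \<otimes> h)"
      using g KG \<open>y0 \<in> E\<close> subgroup.m_closed[OF K(1)] subgroup.m_inv_closed[OF K(1)]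
        inv_mult_mem_stabilizer_iff[of y0 g h]
      by (auto simp: F_def stabilizer_def m_assoc[symmetric] subsetD)
    then show "h \<in> (\<lambda>h. g \<otimes> h) ` F y0" by blast
  next
    fix h assume "h \<in> (\<lambda>h. g \<otimes> h) ` F y0"
    then show "h \<in> F (\<phi> g y0)"
      using g KG \<open>y0 \<in> E\<close> subgroup.m_closed[OF K(1)]
      by (auto simp: F_def composition_rule subsetD)
  qed
  have card_F: "card (F z) = card (F y0)" if "z \<in> ?O" for z
  proof -
    obtain g where g: "g \<in> K" "z = \<phi> g y0" using \<open>z \<in> ?O\<close> O by blast
    have "inj_on (\<lambda>h. g \<otimes> h) (F y0)"
      using inj_on_cmult[of g] g KG by (auto simp: F_def intro: inj_on_subset)
    then show ?thesis using translate[OF g(1)] g(2) by (simp add: card_image)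
  qed
  have "K = (\<Union>z\<in>?O. F z)"
    using O by (auto simp: F_def)
  also have "card \<dots> = (\<Sum>z\<in>?O. card (F z))"
    using K(2) O by (intro card_UN_disjoint) (auto simp: F_def)
  finally have "card K = (\<Sum>z\<in>?O. card (F z))" .
  also have "\<dots> = card ?O * card (F y0)"
    using card_F by simp
  finally show ?thesis
    using card_F[OF y] by (simp add: F_def)
qed

lemma (in group_action) stabilizer_maps_complement:
  assumes "x \<in> E" and "h \<in> stabilizer G \<phi> x" and "y \<in> E - {x}"
  shows "\<phi> h y \<in> E - {x}"
proof -
  have h: "h \<in> carrier G" "\<phi> h x = x"
    using assms(2) by (simp_all add: stabilizer_def)
  then have "\<phi> h y \<noteq> \<phi> h x"
    using inj_prop[OF h(1)] assms(1,3) by (auto dest: inj_onD)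
  moreover have "\<phi> h y \<in> E"
    using element_image[OF h(1) _ refl] assms(3) by blast
  ultimately show ?thesis
    using h(2) by simp
qed

lemma (in group_action) mixing_action_subproduct_orbit:
  assumes K: "subgroup K G" and fin: "finite K" and y0: "y0 \<in> E"
    and mix: "mixing_subproduct (G\<lparr>carrier := K\<rparr>) gs ps"
  shows "mixing_action_subproduct (G\<lparr>carrier := K\<rparr>) \<phi> (orbit (G\<lparr>carrier := K\<rparr>) \<phi> y0) y0 gs ps"
  unfolding mixing_action_subproduct_def
proof (intro conjI ballI)
  show "valid_subproduct (G\<lparr>carrier := K\<rparr>) gs ps"
    using mix by (simp add: mixing_subproduct_def)
  let ?O = "orbit (G\<lparr>carrier := K\<rparr>) \<phi> y0"
  have gs: "set gs \<subseteq> K"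
    and uniform: "\<And>h. h \<in> K \<Longrightarrow> subprod_prob G id gs ps h = 1 / card K"
    using mix by (auto simp: mixing_subproduct_def valid_subproduct_def)
  have "card K \<noteq> 0"
    using fin subgroup.one_closed[OF K] by auto
  fix y assume y: "y \<in> ?O"
  let ?F = "{h \<in> K. \<phi> h y0 = y}"
  have "subprod_prob G (\<lambda>h. \<phi> h y0) gs ps y = (\<Sum>h\<in>?F. subprod_prob G id gs ps h)"
    using subprod_prob_fibres[OF fin subprod_mem_subgroup[OF K gs]] .
  also have "\<dots> = card (?F) / card K"
    using uniform by simp
  also have "\<dots> = 1 / card ?O"
  proof -
    have card: "card ?F * card ?O = card K"
      using card_fibre_mult_card_orbit[OF K fin y0 y] .
    then have "card ?O \<noteq> 0"
      using \<open>card K \<noteq> 0\<close> by (metis mult_0_right)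
    moreover have "real (card ?F) * real (card ?O) = real (card K)"
      using card by (metis of_nat_mult)
    ultimately show ?thesis
      using \<open>card K \<noteq> 0\<close> by (simp add: field_simps)
  qed
  finally show "subprod_prob (G\<lparr>carrier := K\<rparr>) (\<lambda>h. \<phi> h y0) gs ps y = 1 / card ?O"
    by simp
qed

lemma (in group_action) mixing_action_subproduct_snoc:
  assumes fin: "finite E" and x: "x \<in> E" and y0: "y0 \<in> E - {x}"
    and t: "t \<in> carrier G" "\<phi> t x = y0"
    and mix: "mixing_action_subproduct (G\<lparr>carrier := stabilizer G \<phi> x\<rparr>) \<phi> (E - {x}) y0 gs ps"
  defines "p \<equiv> (real (card E) - 1) / real (card E)"
  shows "mixing_action_subproduct G \<phi> E x (gs @ [t]) (ps @ [p])"
  unfolding mixing_action_subproduct_def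
proof (intro conjI ballI)
  let ?S = "stabilizer G \<phi> x"
  have gs: "set gs \<subseteq> ?S" "length gs = length ps" "\<forall>q\<in>set ps. 0 \<le> q \<and> q \<le> 1"
    and uniform: "\<And>y. y \<in> E - {x} \<Longrightarrow>
      subprod_prob G (\<lambda>h. \<phi> h y0) gs ps y = 1 / card (E - {x})"
    using mix by (auto simp: mixing_action_subproduct_def valid_subproduct_def)
  have gs_carrier: "set gs \<subseteq> carrier G"
    using gs(1) stabilizer_subset by blast
  have fixes_x: "subprod G gs es \<in> ?S" for es
    using subprod_mem_subgroup[OF stabilizer_subgroup[OF x] gs(1)] .
  have card_E: "card (E - {x}) = card E - 1" "2 \<le> card E"
    using fin x y0 card_mono[of E "{x, y0}"] by auto
  show "valid_subproduct G (gs @ [t]) (ps @ [p])"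
    using gs gs_carrier t card_E(2) by (auto simp: valid_subproduct_def p_def)
  fix y assume y: "y \<in> E"
  let ?E = "{es. length es = length gs}"
  have "subprod_prob G (\<lambda>g. \<phi> g x) (gs @ [t]) (ps @ [p]) y =
      (\<Sum>es\<in>?E. bern_weight ps es * subprod_prob G (\<lambda>g. \<phi> (subprod G gs es \<otimes> g) x) [t] [p] y)"
    by (rule subprod_prob_append[OF gs(2) gs_carrier]) (use t in simp)
  also have "\<dots> = (\<Sum>es\<in>?E. p * (if \<phi> (subprod G gs es) y0 = y then bern_weight ps es else 0)
      + (if x = y then 1 - p else 0) * bern_weight ps es)"
  proof (intro sum.cong refl)
    fix es
    have a: "subprod G gs es \<in> carrier G" "\<phi> (subprod G gs es) x = x"
      using fixes_x[of es] by (simp_all add: stabilizer_def)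
    then have "\<phi> (subprod G gs es \<otimes> t) x = \<phi> (subprod G gs es) y0"
      using composition_rule[OF x a(1) t(1)] t(2) by simp
    with a show "bern_weight ps es * subprod_prob G (\<lambda>g. \<phi> (subprod G gs es \<otimes> g) x) [t] [p] y =
      p * (if \<phi> (subprod G gs es) y0 = y then bern_weight ps es else 0)
      + (if x = y then 1 - p else 0) * bern_weight ps es"
      by (simp add: subprod_prob_singleton[OF t(1)] algebra_simps)
  qed
  also have "\<dots> = p * subprod_prob G (\<lambda>h. \<phi> h y0) gs ps y + (if x = y then 1 - p else 0)"
    using sum_bern_weight[of ps] gs(2)
    by (simp add: subprod_prob_def sum.distrib flip: sum_distrib_left)
  also have "\<dots> = 1 / card E"
  proof (cases "y = x")
    case True
    have "\<phi> (subprod G gs es) y0 \<noteq> x" for es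
      using stabilizer_maps_complement[OF x fixes_x y0] by blast
    then have "subprod_prob G (\<lambda>h. \<phi> h y0) gs ps y = 0"
      using True by (simp add: subprod_prob_eq_0)
    with True show ?thesis
      using card_E(2) by (simp add: p_def field_simps)
  next
    case False
    then have "subprod_prob G (\<lambda>h. \<phi> h y0) gs ps y = 1 / (real (card E) - 1)"
      using uniform y card_E by (simp add: of_nat_diff)
    with False show ?thesis
      using card_E(2) by (simp add: p_def field_simps)
  qed
  finally show "subprod_prob G (\<lambda>g. \<phi> g x) (gs @ [t]) (ps @ [p]) y = 1 / card E" .
qed

lemma (in group_action) mixing_subproduct_append_stabilizer:
  assumes x: "x \<in> E" and orbit: "orbit G \<phi> x = E"
    and mix_x: "mixing_action_subproduct G \<phi> E x gs ps"
    and mix_S: "mixing_subproduct (G\<lparr>carrier := stabilizer G \<phi> x\<rparr>) gs' ps'"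
  shows "mixing_subproduct G (gs @ gs') (ps @ ps')"
  unfolding mixing_subproduct_def
proof (intro conjI ballI)
  let ?S = "stabilizer G \<phi> x"
  have S: "subgroup ?S G"
    by (rule stabilizer_subgroup[OF x])
  have gs: "length gs = length ps" "set gs \<subseteq> carrier G"
    and uniform: "\<And>y. y \<in> E \<Longrightarrow> subprod_prob G (\<lambda>g. \<phi> g x) gs ps y = 1 / card E"
    using mix_x by (auto simp: mixing_action_subproduct_def valid_subproduct_def)
  have gs': "set gs' \<subseteq> carrier G"
    using mix_S stabilizer_subset by (auto simp: mixing_subproduct_def valid_subproduct_def)
  show "valid_subproduct G (gs @ gs') (ps @ ps')"
    using mix_x mix_S stabilizer_subset
    by (auto simp: mixing_action_subproduct_def mixing_subproduct_def valid_subproduct_def)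
  fix a assume a: "a \<in> carrier G"
  have "subprod_prob G id (gs @ gs') (ps @ ps') a =
      (\<Sum>es\<in>{es. length es = length gs}.
         bern_weight ps es * subprod_prob G (\<lambda>g. subprod G gs es \<otimes> g) gs' ps' a)"
    using subprod_prob_append[OF gs gs', where f = id] by simp
  also have "\<dots> = (\<Sum>es\<in>{es. length es = length gs}.
      bern_weight ps es * (if \<phi> (subprod G gs es) x = \<phi> a x then 1 / card ?S else 0))"
    using subprod_prob_translate_uniform[OF S mix_S subprod_closed[OF gs(2)] a]
      inv_mult_mem_stabilizer_iff[OF x subprod_closed[OF gs(2)] a]
    by (simp add: eq_commute)
  also have "\<dots> = subprod_prob G (\<lambda>g. \<phi> g x) gs ps (\<phi> a x) / card ?S"
    unfolding subprod_prob_def sum_divide_distrib by (intro sum.cong) auto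
  also have "\<dots> = 1 / (card E * card ?S)"
    using uniform[OF element_image[OF a x refl]] by simp
  also have "\<dots> = 1 / card (carrier G)"
    using orbit_stabilizer_theorem[OF x] orbit by (simp add: order_def)
  finally show "subprod_prob G id (gs @ gs') (ps @ ps') a = 1 / card (carrier G)" .
qed

lemma two_transitive_action_orbit:
  assumes "two_transitive_action G X \<phi>" and "x \<in> X"
  shows "orbit G \<phi> x = X"
proof -
  interpret group_action G X \<phi>
    using assms(1) by (simp add: two_transitive_action_def)
  have "y \<in> orbit G \<phi> x" if "y \<in> X" for y
  proof (cases "y = x")
    case False
    with assms that obtain g where "g \<in> carrier G" "\<phi> g x = y"
      unfolding two_transitive_action_def by metis
    then show ?thesis
      by (auto simp: orbit_def)
  qed (use orbit_refl assms(2) in simp)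
  then show ?thesis
    using element_image assms(2) by (auto simp: orbit_def)
qed

lemma two_transitive_action_stabilizer_orbit:
  assumes "two_transitive_action G X \<phi>" and "x \<in> X" and "y \<in> X - {x}"
  shows "orbit (G\<lparr>carrier := stabilizer G \<phi> x\<rparr>) \<phi> y = X - {x}"
proof -
  interpret group_action G X \<phi>
    using assms(1) by (simp add: two_transitive_action_def)
  have "z \<in> orbit (G\<lparr>carrier := stabilizer G \<phi> x\<rparr>) \<phi> y" if "z \<in> X - {x}" for z
  proof -
    from assms that obtain g where "g \<in> carrier G" "\<phi> g x = x" "\<phi> g y = z"
      unfolding two_transitive_action_def by (metis Diff_iff insertCI)
    then show ?thesis
      by (auto simp: orbit_def stabilizer_def)
  qed
  then show ?thesis
    using stabilizer_maps_complement[OF assms(2) _ assms(3)] by (auto simp: orbit_def)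
qed

lemma mixable_action_stabilizer_complement:
  assumes "two_transitive_action G X \<phi>" and "finite (carrier G)" and "x \<in> X"
    and "mixable (G\<lparr>carrier := stabilizer G \<phi> x\<rparr>)"
  shows "mixable_action (G\<lparr>carrier := stabilizer G \<phi> x\<rparr>) \<phi> (X - {x})"
proof -
  interpret group_action G X \<phi>
    using assms(1) by (simp add: two_transitive_action_def)
  obtain gs ps where mix: "mixing_subproduct (G\<lparr>carrier := stabilizer G \<phi> x\<rparr>) gs ps"
    using assms(4) by (auto simp: mixable_def)
  have "\<not> X \<subseteq> {x}"
    using assms(1) card_mono[of "{x}" X] by (auto simp: two_transitive_action_def)
  then obtain y where y: "y \<in> X - {x}"
    by blast
  have "finite (stabilizer G \<phi> x)"
    using finite_subset[OF stabilizer_subset assms(2)] .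
  from mixing_action_subproduct_orbit[OF stabilizer_subgroup[OF assms(3)] this DiffD1[OF y] mix]
  have "mixing_action_subproduct (G\<lparr>carrier := stabilizer G \<phi> x\<rparr>) \<phi> (X - {x}) y gs ps"
    unfolding two_transitive_action_stabilizer_orbit[OF assms(1,3) y] .
  then show ?thesis
    using y unfolding mixable_action_def by blast
qed

lemma mixlen_le: "mixing_subproduct G gs ps \<Longrightarrow> mixlen G \<le> length gs"
  unfolding mixlen_def by (rule Least_le) blast

lemma mixlen_attained:
  assumes "mixable G"
  obtains gs ps where "length gs = mixlen G" and "mixing_subproduct G gs ps"
proof -
  have "\<exists>k gs ps. length gs = k \<and> mixing_subproduct G gs ps"
    using assms by (auto simp: mixable_def)
  from LeastI_ex[OF this] show ?thesis
    using that unfolding mixlen_def by blast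
qed

lemma mixlen_action_attained:
  assumes "mixable_action H \<phi> Y"
  obtains y0 gs ps where "y0 \<in> Y" and "length gs = mixlen_action H \<phi> Y"
    and "mixing_action_subproduct H \<phi> Y y0 gs ps"
proof -
  have "\<exists>k. \<exists>y0\<in>Y. \<exists>gs ps. length gs = k \<and> mixing_action_subproduct H \<phi> Y y0 gs ps"
    using assms by (auto simp: mixable_action_def)
  from LeastI_ex[OF this] show ?thesis
    using that unfolding mixlen_action_def by blast
qed

theorem mainTheorem16:
  fixes G :: "('a, 'm) monoid_scheme" and X :: "'b set" and \<phi> :: "'a \<Rightarrow> 'b \<Rightarrow> 'b" and x :: 'b
  assumes "group G" and "finite (carrier G)" and "finite X"
    and "two_transitive_action G X \<phi>"
    and "x \<in> X"
    and "mixable (G\<lparr>carrier := stabilizer G \<phi> x\<rparr>)"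
  shows "mixable G \<and>
    mixlen G \<le> mixlen (G\<lparr>carrier := stabilizer G \<phi> x\<rparr>)
              + mixlen_action (G\<lparr>carrier := stabilizer G \<phi> x\<rparr>) \<phi> (X - {x}) + 1"
proof -
  let ?H = "G\<lparr>carrier := stabilizer G \<phi> x\<rparr>"
  interpret group_action G X \<phi>
    using assms(4) by (simp add: two_transitive_action_def)
  have orbit: "orbit G \<phi> x = X"
    using two_transitive_action_orbit[OF assms(4,5)] .
  obtain gsH psH where len_H: "length gsH = mixlen ?H" and mix_H: "mixing_subproduct ?H gsH psH"
    using mixlen_attained[OF assms(6)] .
  obtain y0 gsA psA where y0: "y0 \<in> X - {x}"
    and len_A: "length gsA = mixlen_action ?H \<phi> (X - {x})"
    and mix_A: "mixing_action_subproduct ?H \<phi> (X - {x}) y0 gsA psA"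
    using mixlen_action_attained[OF mixable_action_stabilizer_complement[OF assms(4,2,5,6)]] .
  obtain t where t: "t \<in> carrier G" "\<phi> t x = y0"
    using y0 orbit by (auto simp: orbit_def)
  have "mixing_subproduct G ((gsA @ [t]) @ gsH) ((psA @ [(real (card X) - 1) / real (card X)]) @ psH)"
    using mixing_subproduct_append_stabilizer[OF assms(5) orbit
        mixing_action_subproduct_snoc[OF assms(3,5) y0 t mix_A] mix_H] .
  then show ?thesis
    using mixlen_le len_A len_H unfolding mixable_def by fastforce
qed

end
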